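(* Let $\mathbb{G},\mathbb{M}$ be graded groups, $L:\mathbb{G}\to\mathbb{M}$ a surjective h-homomorphism and $N$ its kernel. The following are equivalent: (1) there exists a homogeneous subgroup $H$ of $\mathbb{G}$ complementary to $N$; (2) $L$ is an h-epimorphism. Moreover, if $H$ is a homogeneous subgroup complementary to $N$, then the restriction $L|_H:H\to\mathbb{M}$ is an h-isomorphism.
   Context: Graded group: connected simply connected real Lie group with Lie algebra $V_1\oplus\cdots\oplus V_\iota$, $[V_i,V_j]\subset V_{i+j}$; dilations act by $r^i$ on $V_i$. h-homomorphism: group homomorphism commuting with dilations; h-isomorphism: invertible h-homomorphism; h-epimorphism: h-homomorphism admitting a right inverse that is an h-homomorphism. Homogeneous subgroup: closed connected simply connected Lie subgroup invariant under all dilations. $N,H$ complementary: $NH=\mathbb{G}$ and $N\cap H=\{e\}$. *)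

theory Defs
  imports "HOL-Analysis.Analysis" "HOL-Algebra.Coset"
begin

primrec Ck :: "nat \<Rightarrow> ('a::euclidean_space \<Rightarrow> 'b::real_normed_vector) \<Rightarrow> bool" where
  "Ck 0 f = continuous_on UNIV f"
| "Ck (Suc k) f = ((\<forall>x. f differentiable (at x)) \<and>
                   (\<forall>v. Ck k (\<lambda>x. frechet_derivative f (at x) v)))"

definition smooth :: "('a::euclidean_space \<Rightarrow> 'b::real_normed_vector) \<Rightarrow> bool" where
  "smooth f \<longleftrightarrow> (\<forall>k. Ck k f)"

record 'a dil_group = "'a monoid" +
  dil :: "real \<Rightarrow> 'a \<Rightarrow> 'a"

text \<open>Graded group, in exponential coordinates: the underlying manifold is the
  finite-dimensional real vector space 'a (the Lie algebra), the group law and the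
  inversion are smooth (so we have a connected, simply connected Lie group), the
  Lie algebra 'a splits as V_1 + ... + V_iota (direct sum of linear subspaces), and
  the dilation dil r is the linear map acting by r^i on V_i; dilations are group
  automorphisms (equivalently the Lie bracket satisfies [V_i,V_j] \<subseteq> V_(i+j)).\<close>

definition graded_group :: "('a::euclidean_space) dil_group \<Rightarrow> bool" where
  "graded_group G \<longleftrightarrow>
     group G \<and> carrier G = UNIV \<and>
     smooth (\<lambda>(x, y). x \<otimes>\<^bsub>G\<^esub> y) \<and> smooth (\<lambda>x. inv\<^bsub>G\<^esub> x) \<and>
     (\<exists>(\<iota>::nat) (V :: nat \<Rightarrow> 'a set).
        (\<forall>i\<in>{1..\<iota>}. subspace (V i)) \<and>
        (\<forall>x. \<exists>!v. (\<forall>i. (i \<in> {1..\<iota>} \<longrightarrow> v i \<in> V i) \<and> (i \<notin> {1..\<iota>} \<longrightarrow> v i = 0))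
                  \<and> x = (\<Sum>i=1..\<iota>. v i)) \<and>
        (\<forall>r>0. linear (dil G r) \<and> (\<forall>i\<in>{1..\<iota>}. \<forall>v\<in>V i. dil G r v = r ^ i *\<^sub>R v))) \<and>
     (\<forall>r>0. dil G r \<in> hom G G)"

definition h_hom :: "('a, 'c) dil_group_scheme \<Rightarrow> ('b, 'd) dil_group_scheme \<Rightarrow> ('a \<Rightarrow> 'b) \<Rightarrow> bool" where
  "h_hom G M f \<longleftrightarrow> f \<in> hom G M \<and>
     (\<forall>r>0. \<forall>x\<in>carrier G. f (dil G r x) = dil M r (f x))"

definition h_iso :: "('a, 'c) dil_group_scheme \<Rightarrow> ('b, 'd) dil_group_scheme \<Rightarrow> ('a \<Rightarrow> 'b) \<Rightarrow> bool" where
  "h_iso G M f \<longleftrightarrow> h_hom G M f \<and>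
     (\<exists>g. h_hom M G g \<and> (\<forall>x\<in>carrier G. g (f x) = x) \<and> (\<forall>y\<in>carrier M. f (g y) = y))"

definition h_epi :: "('a, 'c) dil_group_scheme \<Rightarrow> ('b, 'd) dil_group_scheme \<Rightarrow> ('a \<Rightarrow> 'b) \<Rightarrow> bool" where
  "h_epi G M f \<longleftrightarrow> h_hom G M f \<and>
     (\<exists>g. h_hom M G g \<and> (\<forall>y\<in>carrier M. f (g y) = y))"

text \<open>Homogeneous subgroup: closed (hence embedded Lie), connected, simply connected
  subgroup invariant under all dilations.\<close>

definition homogeneous_subgroup :: "('a::euclidean_space) dil_group \<Rightarrow> 'a set \<Rightarrow> bool" where
  "homogeneous_subgroup G H \<longleftrightarrow> subgroup H G \<and> closed H \<and> connected H \<and>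
     simply_connected H \<and> (\<forall>r>0. dil G r ` H \<subseteq> H)"

definition complementary :: "('a, 'c) dil_group_scheme \<Rightarrow> 'a set \<Rightarrow> 'a set \<Rightarrow> bool" where
  "complementary G N H \<longleftrightarrow> N <#>\<^bsub>G\<^esub> H = carrier G \<and> N \<inter> H = {\<one>\<^bsub>G\<^esub>}"

end

theory Submission
  imports Defs
begin

text \<open>
  If \<open>H\<close> is a homogeneous complement of the kernel \<open>N\<close>, then \<open>L\<close> restricts to a bijective
  h-homomorphism \<open>H \<rightarrow> M\<close>, whose inverse is a homogeneous section of \<open>L\<close>. Conversely, the
  image \<open>H = g(M)\<close> of a homogeneous section \<open>g\<close> is a dilation invariant subgroup complementary
  to \<open>N\<close>, and \<open>L\<close> restricts to a homeomorphism \<open>H \<rightarrow> M\<close> with inverse \<open>g\<close>, so \<open>H\<close> is closed,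
  connected and simply connected.

  The only analytic input is that h-homomorphisms \<open>f\<close>, which are not assumed continuous, are
  continuous. Choose linear maps \<open>u\<^sub>k(x) = \<langle>x, e\<^sub>k\<rangle> v\<^sub>k\<close> with each \<open>v\<^sub>k\<close> in a layer \<open>V\<^sub>i\<close> and
  \<open>\<Sum>\<^sub>k u\<^sub>k = id\<close>. The product map \<open>x \<mapsto> u\<^sub>1(x) \<cdot> \<dots> \<cdot> u\<^sub>n(x)\<close> has the identity as differential at
  \<open>0 = e\<close>, so it covers a neighbourhood of \<open>e\<close> by images of the unit ball. Since
  \<open>f(s v) = \<delta>\<^bsub>s^(1/i)\<^esub> f(v)\<close> for \<open>v \<in> V\<^sub>i\<close> and \<open>0 < s \<le> 1\<close>, the factors have bounded images under \<open>f\<close>,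
  hence \<open>f\<close> is bounded near \<open>e\<close>. Writing \<open>f = \<delta>\<^sub>r \<circ> f \<circ> \<delta>\<^bsub>1/r\<^esub>\<close> with \<open>r\<close> small turns boundedness
  into continuity at \<open>e\<close>, and left translations give continuity everywhere.
\<close>

section \<open>Graded groups in exponential coordinates\<close>

locale graded_coordinates =
  fixes G :: "('a::euclidean_space) dil_group" and \<iota> :: nat and V :: "nat \<Rightarrow> 'a set"
  assumes is_group: "group G" and carrier_eq_UNIV: "carrier G = UNIV"
    and smooth_mult: "smooth (\<lambda>(x, y). x \<otimes>\<^bsub>G\<^esub> y)"
    and subspace_layers: "\<forall>i\<in>{1..\<iota>}. subspace (V i)"
    and unique_decomposition:
      "\<forall>x. \<exists>!v. (\<forall>i. (i \<in> {1..\<iota>} \<longrightarrow> v i \<in> V i) \<and> (i \<notin> {1..\<iota>} \<longrightarrow> v i = 0))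
                 \<and> x = (\<Sum>i=1..\<iota>. v i)"
    and dil_graded: "\<forall>r>0. linear (dil G r) \<and> (\<forall>i\<in>{1..\<iota>}. \<forall>v\<in>V i. dil G r v = r ^ i *\<^sub>R v)"
    and dil_hom: "\<forall>r>0. dil G r \<in> hom G G"

lemma graded_group_imp_graded_coordinates:
  "graded_group G \<Longrightarrow> \<exists>\<iota> V. graded_coordinates G \<iota> V"
  unfolding graded_group_def graded_coordinates_def by blast

context graded_coordinates
begin

lemma subspace_layer: "i \<in> {1..\<iota>} \<Longrightarrow> subspace (V i)"
  using subspace_layers by blast

lemma linear_dil: "r > 0 \<Longrightarrow> linear (dil G r)"
  using dil_graded by blast

lemma dil_layer: "r > 0 \<Longrightarrow> i \<in> {1..\<iota>} \<Longrightarrow> v \<in> V i \<Longrightarrow> dil G r v = r ^ i *\<^sub>R v"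
  using dil_graded by blast

definition layer_decomposition :: "'a \<Rightarrow> (nat \<Rightarrow> 'a) \<Rightarrow> bool" where
  "layer_decomposition x v \<longleftrightarrow>
     (\<forall>i. (i \<in> {1..\<iota>} \<longrightarrow> v i \<in> V i) \<and> (i \<notin> {1..\<iota>} \<longrightarrow> v i = 0)) \<and> x = (\<Sum>i=1..\<iota>. v i)"

definition layer_proj :: "nat \<Rightarrow> 'a \<Rightarrow> 'a" where
  "layer_proj i x = (THE v. layer_decomposition x v) i"

lemma layer_decomposition_layer_proj: "layer_decomposition x (\<lambda>i. layer_proj i x)"
proof -
  have "\<exists>!v. layer_decomposition x v"
    using unique_decomposition unfolding layer_decomposition_def by blast
  then have "layer_decomposition x (THE v. layer_decomposition x v)" by (rule theI')
  then show ?thesis unfolding layer_proj_def by (simp add: eta_contract_eq)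
qed

lemma layer_proj_in_layer: "i \<in> {1..\<iota>} \<Longrightarrow> layer_proj i x \<in> V i"
  using layer_decomposition_layer_proj[of x] unfolding layer_decomposition_def by blast

lemma layer_proj_outside: "i \<notin> {1..\<iota>} \<Longrightarrow> layer_proj i x = 0"
  using layer_decomposition_layer_proj[of x] unfolding layer_decomposition_def by blast

lemma sum_layer_proj: "(\<Sum>i=1..\<iota>. layer_proj i x) = x"
  using layer_decomposition_layer_proj[of x] unfolding layer_decomposition_def by simp

lemma layer_proj_eqI:
  assumes "\<And>i. i \<in> {1..\<iota>} \<Longrightarrow> w i \<in> V i" and "\<And>i. i \<notin> {1..\<iota>} \<Longrightarrow> w i = 0"
    and "x = (\<Sum>i=1..\<iota>. w i)"
  shows "layer_proj i x = w i"
proof -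
  have "layer_decomposition x w" using assms unfolding layer_decomposition_def by blast
  moreover have "\<exists>!v. layer_decomposition x v"
    using unique_decomposition unfolding layer_decomposition_def by blast
  ultimately have "w = (\<lambda>i. layer_proj i x)" using layer_decomposition_layer_proj by blast
  then show ?thesis by simp
qed

lemma linear_layer_proj: "linear (layer_proj i)"
proof
  show "layer_proj i (x + y) = layer_proj i x + layer_proj i y" for x y
  proof (rule layer_proj_eqI)
    show "x + y = (\<Sum>i=1..\<iota>. layer_proj i x + layer_proj i y)"
      using sum_layer_proj[of x] sum_layer_proj[of y] by (simp add: sum.distrib)
  qed (simp_all add: layer_proj_in_layer layer_proj_outside subspace_layer real_vector.subspace_add)
  show "layer_proj i (c *\<^sub>R x) = c *\<^sub>R layer_proj i x" for c x
  proof (rule layer_proj_eqI)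
    show "c *\<^sub>R x = (\<Sum>i=1..\<iota>. c *\<^sub>R layer_proj i x)"
      using sum_layer_proj[of x] by (simp add: scaleR_sum_right[symmetric])
  qed (simp_all add: layer_proj_in_layer layer_proj_outside subspace_layer real_vector.subspace_scale)
qed

lemma dil_eq_sum_layer_proj:
  assumes "r > 0" shows "dil G r x = (\<Sum>i=1..\<iota>. r ^ i *\<^sub>R layer_proj i x)"
proof -
  have "dil G r x = (\<Sum>i=1..\<iota>. dil G r (layer_proj i x))"
    using linear_sum[OF linear_dil[OF assms]] sum_layer_proj[of x] by metis
  also have "\<dots> = (\<Sum>i=1..\<iota>. r ^ i *\<^sub>R layer_proj i x)"
    using assms by (intro sum.cong) (simp_all add: dil_layer layer_proj_in_layer)
  finally show ?thesis .
qed

lemma layer_proj_dil: "r > 0 \<Longrightarrow> layer_proj i (dil G r x) = r ^ i *\<^sub>R layer_proj i x"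
  by (rule layer_proj_eqI)
     (simp_all add: layer_proj_in_layer layer_proj_outside subspace_layer
       real_vector.subspace_scale dil_eq_sum_layer_proj)

lemma dil_dil: "r > 0 \<Longrightarrow> s > 0 \<Longrightarrow> dil G r (dil G s x) = dil G (r * s) x"
  using layer_proj_dil dil_eq_sum_layer_proj by (simp add: power_mult_distrib mult.commute)

lemma dil_1: "dil G 1 x = x"
  using dil_eq_sum_layer_proj[of 1 x] sum_layer_proj[of x] by simp

lemma dil_dil_inverse: "r > 0 \<Longrightarrow> dil G r (dil G (1/r) x) = x"
  by (simp add: dil_dil dil_1)

lemma sum_norm_layer_proj_le: "\<exists>C\<ge>0. \<forall>z. (\<Sum>i=1..\<iota>. norm (layer_proj i z)) \<le> C * norm z"
proof -
  have "\<forall>i. \<exists>K>0. \<forall>z. norm (layer_proj i z) \<le> norm z * K"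
    using linear_layer_proj linear_conv_bounded_linear bounded_linear.pos_bounded by blast
  then obtain K where K: "\<And>i. K i > 0" "\<And>i z. norm (layer_proj i z) \<le> norm z * K i"
    by metis
  have "(\<Sum>i=1..\<iota>. norm (layer_proj i z)) \<le> (\<Sum>i=1..\<iota>. norm z * K i)" for z
    using K(2) by (rule sum_mono)
  then have "(\<Sum>i=1..\<iota>. norm (layer_proj i z)) \<le> (\<Sum>i=1..\<iota>. K i) * norm z" for z
    by (simp add: sum_distrib_left mult.commute)
  moreover have "0 \<le> (\<Sum>i=1..\<iota>. K i)" using K(1) by (simp add: sum_nonneg less_imp_le)
  ultimately show ?thesis by blast
qed

lemma norm_dil_le: "\<exists>C\<ge>0. \<forall>r z. 0 < r \<longrightarrow> r \<le> 1 \<longrightarrow> norm (dil G r z) \<le> r * C * norm z"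
proof -
  obtain C where C: "C \<ge> 0" "\<And>z. (\<Sum>i=1..\<iota>. norm (layer_proj i z)) \<le> C * norm z"
    using sum_norm_layer_proj_le by blast
  have "norm (dil G r z) \<le> r * C * norm z" if r: "0 < r" "r \<le> 1" for r z
  proof -
    have "norm (dil G r z) \<le> (\<Sum>i=1..\<iota>. norm (r ^ i *\<^sub>R layer_proj i z))"
      unfolding dil_eq_sum_layer_proj[OF r(1)] by (rule norm_sum)
    also have "\<dots> \<le> (\<Sum>i=1..\<iota>. r * norm (layer_proj i z))"
    proof (rule sum_mono)
      fix i assume "i \<in> {1..\<iota>}"
      then have "r ^ i \<le> r ^ 1" using r by (intro power_decreasing) auto
      then show "norm (r ^ i *\<^sub>R layer_proj i z) \<le> r * norm (layer_proj i z)"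
        using r by (simp add: mult_right_mono)
    qed
    also have "\<dots> \<le> r * (C * norm z)" using C(2) r by (simp add: sum_distrib_left[symmetric])
    finally show ?thesis by (simp add: mult.assoc)
  qed
  then show ?thesis using C(1) by blast
qed

lemma norm_dil_inverse_le:
  "\<exists>C\<ge>0. \<forall>r z. 0 < r \<longrightarrow> r \<le> 1 \<longrightarrow> norm (dil G (1/r) z) \<le> C / r ^ \<iota> * norm z"
proof -
  obtain C where C: "C \<ge> 0" "\<And>z. (\<Sum>i=1..\<iota>. norm (layer_proj i z)) \<le> C * norm z"
    using sum_norm_layer_proj_le by blast
  have "norm (dil G (1/r) z) \<le> C / r ^ \<iota> * norm z" if r: "0 < r" "r \<le> 1" for r z
  proof -
    have "1/r > 0" using r by simp
    have "norm (dil G (1/r) z) \<le> (\<Sum>i=1..\<iota>. norm ((1/r) ^ i *\<^sub>R layer_proj i z))"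
      unfolding dil_eq_sum_layer_proj[OF \<open>1/r > 0\<close>] by (rule norm_sum)
    also have "\<dots> \<le> (\<Sum>i=1..\<iota>. (1/r) ^ \<iota> * norm (layer_proj i z))"
    proof (rule sum_mono)
      fix i assume "i \<in> {1..\<iota>}"
      then have "(1/r) ^ i \<le> (1/r) ^ \<iota>" using r by (intro power_increasing) auto
      then show "norm ((1/r) ^ i *\<^sub>R layer_proj i z) \<le> (1/r) ^ \<iota> * norm (layer_proj i z)"
        using r by (simp add: mult_right_mono)
    qed
    also have "\<dots> \<le> (1/r) ^ \<iota> * (C * norm z)"
      using C(2) r by (simp add: sum_distrib_left[symmetric])
    finally show ?thesis by (simp add: power_one_over)
  qed
  then show ?thesis using C(1) by blast
qed

text \<open>Dilations fix the identity and act by \<open>2\<^sup>i \<noteq> 1\<close> on the \<open>i\<close>-th layer.\<close>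

lemma one_eq_zero: "\<one>\<^bsub>G\<^esub> = 0"
proof -
  have fixed: "dil G 2 \<one>\<^bsub>G\<^esub> = \<one>\<^bsub>G\<^esub>" using dil_hom is_group by (simp add: hom_one)
  have "layer_proj i \<one>\<^bsub>G\<^esub> = 0" for i
  proof (cases "i \<in> {1..\<iota>}")
    case True
    then have "(1::real) < 2 ^ i" by (intro one_less_power) auto
    moreover have "1 *\<^sub>R layer_proj i \<one>\<^bsub>G\<^esub> = 2 ^ i *\<^sub>R layer_proj i \<one>\<^bsub>G\<^esub>"
      using layer_proj_dil[of 2 i "\<one>\<^bsub>G\<^esub>"] fixed by simp
    ultimately show ?thesis by (metis scaleR_cancel_right less_irrefl)
  qed (rule layer_proj_outside)
  then show ?thesis using sum_layer_proj[of "\<one>\<^bsub>G\<^esub>"] by simp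
qed

lemma mult_zero_right: "x \<otimes>\<^bsub>G\<^esub> 0 = x"
  using monoid.r_one[OF group.is_monoid[OF is_group]] carrier_eq_UNIV one_eq_zero by force

lemma mult_zero_left: "0 \<otimes>\<^bsub>G\<^esub> x = x"
  using monoid.l_one[OF group.is_monoid[OF is_group]] carrier_eq_UNIV one_eq_zero by force

lemma continuous_on_mult: "continuous_on UNIV (\<lambda>(x, y). x \<otimes>\<^bsub>G\<^esub> y)"
  using smooth_mult unfolding smooth_def by (metis Ck.simps(1))

lemma continuous_left_translation: "isCont (\<lambda>y. x \<otimes>\<^bsub>G\<^esub> y) z"
proof -
  have "continuous_on UNIV (\<lambda>y. (\<lambda>(x, y). x \<otimes>\<^bsub>G\<^esub> y) (x, y))"
    by (rule continuous_on_compose2[OF continuous_on_mult]) (auto intro: continuous_intros)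
  then show ?thesis by (simp add: continuous_on_eq_continuous_at)
qed

lemma bounded_mult_image: "\<exists>C. \<forall>a b. norm a \<le> K \<longrightarrow> norm b \<le> B \<longrightarrow> norm (a \<otimes>\<^bsub>G\<^esub> b) \<le> C"
proof -
  have "compact ((\<lambda>(x, y). x \<otimes>\<^bsub>G\<^esub> y) ` (cball 0 K \<times> cball 0 B))"
    by (rule compact_continuous_image[OF continuous_on_subset[OF continuous_on_mult]])
       (auto intro: compact_Times)
  then obtain C where "\<forall>z\<in>(\<lambda>(x, y). x \<otimes>\<^bsub>G\<^esub> y) ` (cball 0 K \<times> cball 0 B). norm z \<le> C"
    using compact_imp_bounded bounded_iff by meson
  then show ?thesis by force
qed

text \<open>The differential of the group law at \<open>(e, e)\<close> is addition, as \<open>x \<cdot> e = x = e \<cdot> x\<close>.\<close>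

lemma mult_has_derivative_zero:
  "((\<lambda>(x, y). x \<otimes>\<^bsub>G\<^esub> y) has_derivative (\<lambda>p. fst p + snd p)) (at (0, 0))"
proof -
  define m where "m = (\<lambda>(x, y). x \<otimes>\<^bsub>G\<^esub> y)"
  have "Ck (Suc 0) m" using smooth_mult unfolding smooth_def m_def by blast
  then have "m differentiable (at (0, 0))" by simp
  then obtain D where D: "(m has_derivative D) (at (0, 0))"
    unfolding differentiable_def by blast
  have "((\<lambda>x. m (x, 0)) has_derivative (\<lambda>h. D (h, 0))) (at 0)"
    using has_derivative_compose[OF has_derivative_Pair[OF has_derivative_ident
          has_derivative_const[of 0]], of m D] D by simp
  moreover have "(\<lambda>x. m (x, 0)) = (\<lambda>x. x)" unfolding m_def by (simp add: mult_zero_right)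
  ultimately have D1: "D (h, 0) = h" for h
    using has_derivative_ident has_derivative_unique by metis
  have "((\<lambda>y. m (0, y)) has_derivative (\<lambda>h. D (0, h))) (at 0)"
    using has_derivative_compose[OF has_derivative_Pair[OF has_derivative_const[of 0]
          has_derivative_ident], of m D] D by simp
  moreover have "(\<lambda>y. m (0, y)) = (\<lambda>y. y)" unfolding m_def by (simp add: mult_zero_left)
  ultimately have D2: "D (0, h) = h" for h
    using has_derivative_ident has_derivative_unique by metis
  have "D p = D (fst p, 0) + D (0, snd p)" for p
    using linear_add[OF has_derivative_linear[OF D], of "(fst p, 0)" "(0, snd p)"] by simp
  then have "D = (\<lambda>p. fst p + snd p)" using D1 D2 by auto
  then show ?thesis using D unfolding m_def by simp
qed

end

section \<open>Products of maps near the identity\<close>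

text \<open>The product starts from \<open>0\<close>, the identity of a graded group in exponential coordinates.\<close>

definition foldr_mult :: "('a \<times> 'a \<Rightarrow> 'a) \<Rightarrow> ('b \<Rightarrow> 'a) list \<Rightarrow> 'b \<Rightarrow> 'a::zero" where
  "foldr_mult m us x = foldr (\<lambda>u acc. m (u x, acc)) us 0"

lemma foldr_mult_Nil [simp]: "foldr_mult m [] x = 0"
  by (simp add: foldr_mult_def)

lemma foldr_mult_Cons [simp]: "foldr_mult m (u # us) x = m (u x, foldr_mult m us x)"
  by (simp add: foldr_mult_def)

lemma continuous_on_foldr_mult:
  assumes "continuous_on UNIV m" and "\<And>u. u \<in> set us \<Longrightarrow> continuous_on UNIV u"
  shows "continuous_on UNIV (foldr_mult m us)"
  using assms(2)
proof (induction us)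
  case (Cons u us)
  have "continuous_on UNIV (\<lambda>x. (u x, foldr_mult m us x))"
    using Cons by (intro continuous_on_Pair) auto
  then have "continuous_on UNIV (\<lambda>x. m (u x, foldr_mult m us x))"
    by (rule continuous_on_compose2[OF assms(1)]) auto
  then show ?case by simp
qed simp

lemma foldr_mult_has_derivative:
  fixes m :: "'a \<times> 'a \<Rightarrow> 'a::real_normed_vector" and us :: "('b::euclidean_space \<Rightarrow> 'a) list"
  assumes m: "(m has_derivative (\<lambda>p. fst p + snd p)) (at (0, 0))" and "m (0, 0) = 0"
    and "\<And>u. u \<in> set us \<Longrightarrow> linear u"
  shows "(foldr_mult m us has_derivative (\<lambda>h. sum_list (map (\<lambda>u. u h) us))) (at 0)
         \<and> foldr_mult m us 0 = 0"
  using assms(3)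
proof (induction us)
  case Nil
  then show ?case by simp
next
  case (Cons u us)
  then have lu: "linear u" and IH:
    "(foldr_mult m us has_derivative (\<lambda>h. sum_list (map (\<lambda>u. u h) us))) (at 0)"
    "foldr_mult m us 0 = 0"
    by auto
  have "(u has_derivative u) (at 0)"
    using lu by (simp add: bounded_linear_imp_has_derivative linear_conv_bounded_linear)
  moreover have "(m has_derivative (\<lambda>p. fst p + snd p)) (at (u 0, foldr_mult m us 0))"
    using m linear_0[OF lu] IH(2) by simp
  ultimately have "((\<lambda>x. m (u x, foldr_mult m us x))
      has_derivative (\<lambda>h. u h + sum_list (map (\<lambda>u. u h) us))) (at 0)"
    using has_derivative_compose[OF has_derivative_Pair[OF _ IH(1)]] by fastforce
  then show ?case using linear_0[OF lu] IH(2) assms(2) by simp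
qed

context graded_coordinates
begin

lemma layer_coordinate_maps:
  obtains us :: "('a \<Rightarrow> 'a) list"
  where "\<And>h. sum_list (map (\<lambda>u. u h) us) = h"
    and "\<And>u. u \<in> set us \<Longrightarrow> \<exists>e\<in>Basis. \<exists>i\<in>{1..\<iota>}. u = (\<lambda>x. (x \<bullet> e) *\<^sub>R layer_proj i e)"
proof -
  obtain ps :: "('a \<times> nat) list" where ps: "set ps = Basis \<times> {1..\<iota>}" "distinct ps"
    using finite_distinct_list[of "Basis \<times> {1..\<iota>}"] by auto
  define us where "us = map (\<lambda>(e, i) x. (x \<bullet> e) *\<^sub>R layer_proj i e) ps"
  have "sum_list (map (\<lambda>u. u h) us) = h" for h
  proof -
    have "sum_list (map (\<lambda>u. u h) us) = (\<Sum>(e, i)\<in>Basis \<times> {1..\<iota>}. (h \<bullet> e) *\<^sub>R layer_proj i e)"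
      using ps by (simp add: us_def comp_def case_prod_unfold sum_list_distinct_conv_sum_set)
    also have "\<dots> = (\<Sum>e\<in>Basis. (h \<bullet> e) *\<^sub>R (\<Sum>i=1..\<iota>. layer_proj i e))"
      by (simp add: sum.cartesian_product[symmetric] scaleR_sum_right)
    also have "\<dots> = h" using sum_layer_proj euclidean_representation[of h] by simp
    finally show ?thesis .
  qed
  moreover have "\<exists>e\<in>Basis. \<exists>i\<in>{1..\<iota>}. u = (\<lambda>x. (x \<bullet> e) *\<^sub>R layer_proj i e)" if "u \<in> set us" for u
    using that ps(1) unfolding us_def by auto
  ultimately show ?thesis using that by blast
qed

lemma ball_subset_foldr_mult_image:
  assumes "\<And>h. sum_list (map (\<lambda>u. u h) us) = h"
    and "\<And>u. u \<in> set us \<Longrightarrow> linear u"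
  shows "\<exists>\<epsilon>>0. ball 0 \<epsilon> \<subseteq> foldr_mult (\<lambda>(x, y). x \<otimes>\<^bsub>G\<^esub> y) us ` ball 0 1"
proof -
  define \<phi> where "\<phi> = foldr_mult (\<lambda>(x, y). x \<otimes>\<^bsub>G\<^esub> y) us"
  have "(\<phi> has_derivative (\<lambda>h. sum_list (map (\<lambda>u. u h) us))) (at 0) \<and> \<phi> 0 = 0"
    unfolding \<phi>_def
    by (rule foldr_mult_has_derivative[OF mult_has_derivative_zero])
       (simp_all add: mult_zero_right assms(2))
  then have "(\<phi> has_derivative id) (at 0)" and \<phi>0: "\<phi> 0 = 0"
    using assms(1) by (simp_all add: id_def)
  moreover have "continuous_on UNIV \<phi>"
    unfolding \<phi>_def using assms(2) linear_continuous_on linear_conv_bounded_linear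
    by (blast intro: continuous_on_foldr_mult continuous_on_mult)
  ultimately have "\<phi> 0 \<in> interior (\<phi> ` ball 0 1)"
    by (intro sussmann_open_mapping[where g' = id]) auto
  then show ?thesis using \<phi>0 mem_interior unfolding \<phi>_def by metis
qed

end

section \<open>Continuity of h-homomorphisms\<close>

locale graded_h_hom = G: graded_coordinates G \<iota>G VG + M: graded_coordinates M \<iota>M VM
  for G :: "('a::euclidean_space) dil_group" and \<iota>G VG
    and M :: "('b::euclidean_space) dil_group" and \<iota>M VM +
  fixes f :: "'a \<Rightarrow> 'b"
  assumes h_hom: "h_hom G M f"
begin

lemma f_zero: "f 0 = 0"
  using hom_one[of f G M] h_hom G.is_group M.is_group G.one_eq_zero M.one_eq_zero
  unfolding h_hom_def by simp

lemma f_mult: "f (x \<otimes>\<^bsub>G\<^esub> y) = f x \<otimes>\<^bsub>M\<^esub> f y"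
  using h_hom G.carrier_eq_UNIV unfolding h_hom_def by (simp add: hom_mult)

lemma f_dil: "r > 0 \<Longrightarrow> f (dil G r x) = dil M r (f x)"
  using h_hom G.carrier_eq_UNIV unfolding h_hom_def by blast

lemma bounded_on_layer_segment:
  assumes i: "i \<in> {1..\<iota>G}" and v: "v \<in> VG i"
  shows "\<exists>K. \<forall>s. \<bar>s\<bar> \<le> 1 \<longrightarrow> norm (f (s *\<^sub>R v)) \<le> K"
proof -
  obtain C where C: "C \<ge> 0"
    "\<And>r z. 0 < r \<Longrightarrow> r \<le> 1 \<Longrightarrow> norm (dil M r z) \<le> r * C * norm z"
    using M.norm_dil_le by blast
  have scaled: "norm (f (s *\<^sub>R w)) \<le> C * norm (f w)" if "w \<in> VG i" "0 < s" "s \<le> 1" for w s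
  proof -
    define \<rho> where "\<rho> = root i s"
    have \<rho>: "0 < \<rho>" "\<rho> \<le> 1" "\<rho> ^ i = s"
      using i that unfolding \<rho>_def by (auto simp: real_root_gt_zero)
    then have "f (s *\<^sub>R w) = dil M \<rho> (f w)"
      using G.dil_layer[OF \<rho>(1) i \<open>w \<in> VG i\<close>] f_dil by metis
    then have "norm (f (s *\<^sub>R w)) \<le> \<rho> * C * norm (f w)" using C(2) \<rho> by simp
    also have "\<dots> \<le> C * norm (f w)"
      using \<rho> C(1) mult_right_mono[of \<rho> 1 "C * norm (f w)"] by (simp add: mult.assoc)
    finally show ?thesis .
  qed
  have "- v \<in> VG i" using G.subspace_layer[OF i] v by (rule real_vector.subspace_neg)
  then have "norm (f (s *\<^sub>R v)) \<le> C * (norm (f v) + norm (f (- v)))" if "\<bar>s\<bar> \<le> 1" for s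
    using that scaled[OF v, of s] scaled[of "- v" "- s"] C(1) f_zero
    by (cases s "0::real" rule: linorder_cases) (auto intro: order_trans[OF _ mult_left_mono])
  then show ?thesis by blast
qed

lemma bounded_foldr_mult:
  assumes "\<And>u. u \<in> set us \<Longrightarrow> \<exists>K. \<forall>x\<in>S. norm (f (u x)) \<le> K"
  shows "\<exists>B. \<forall>x\<in>S. norm (f (foldr_mult (\<lambda>(x, y). x \<otimes>\<^bsub>G\<^esub> y) us x)) \<le> B"
  using assms
proof (induction us)
  case Nil
  then show ?case using f_zero by auto
next
  case (Cons u us)
  obtain K where "\<forall>x\<in>S. norm (f (u x)) \<le> K" using Cons.prems by auto
  moreover obtain B where "\<forall>x\<in>S. norm (f (foldr_mult (\<lambda>(x, y). x \<otimes>\<^bsub>G\<^esub> y) us x)) \<le> B"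
    using Cons by auto
  moreover obtain C where "\<forall>a b. norm a \<le> K \<longrightarrow> norm b \<le> B \<longrightarrow> norm (a \<otimes>\<^bsub>M\<^esub> b) \<le> C"
    using M.bounded_mult_image by blast
  ultimately have "\<forall>x\<in>S. norm (f (foldr_mult (\<lambda>(x, y). x \<otimes>\<^bsub>G\<^esub> y) (u # us) x)) \<le> C"
    by (simp add: f_mult)
  then show ?case by blast
qed

lemma locally_bounded: "\<exists>\<epsilon>>0. \<exists>K. \<forall>x. norm x < \<epsilon> \<longrightarrow> norm (f x) \<le> K"
proof -
  obtain us where sum_us: "\<And>h. sum_list (map (\<lambda>u. u h) us) = h"
    and us: "\<And>u. u \<in> set us \<Longrightarrow> \<exists>e\<in>Basis. \<exists>i\<in>{1..\<iota>G}. u = (\<lambda>x. (x \<bullet> e) *\<^sub>R G.layer_proj i e)"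
    by (rule G.layer_coordinate_maps) (rule that)
  have "linear u" if "u \<in> set us" for u
    using us[OF that] by (auto simp: linear_iff inner_add_left scaleR_add_left)
  then obtain \<epsilon> where \<epsilon>: "\<epsilon> > 0" "ball 0 \<epsilon> \<subseteq> foldr_mult (\<lambda>(x, y). x \<otimes>\<^bsub>G\<^esub> y) us ` ball 0 1"
    using G.ball_subset_foldr_mult_image[OF sum_us] by blast
  have "\<exists>K. \<forall>x\<in>ball 0 1. norm (f (u x)) \<le> K" if u_in: "u \<in> set us" for u
  proof -
    obtain e i where e: "e \<in> Basis" and i: "i \<in> {1..\<iota>G}"
      and u: "u = (\<lambda>x. (x \<bullet> e) *\<^sub>R G.layer_proj i e)"
      using us[OF u_in] by blast
    obtain K where K: "\<forall>s. \<bar>s\<bar> \<le> 1 \<longrightarrow> norm (f (s *\<^sub>R G.layer_proj i e)) \<le> K"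
      using bounded_on_layer_segment[OF i G.layer_proj_in_layer[OF i]] by blast
    have "norm (f (u x)) \<le> K" if "x \<in> ball 0 1" for x
    proof -
      have "\<bar>x \<bullet> e\<bar> \<le> 1" using Cauchy_Schwarz_ineq2[of x e] that e by simp
      then show ?thesis using K unfolding u by simp
    qed
    then show ?thesis by blast
  qed
  then have "\<exists>B. \<forall>x\<in>ball 0 1. norm (f (foldr_mult (\<lambda>(x, y). x \<otimes>\<^bsub>G\<^esub> y) us x)) \<le> B"
    by (rule bounded_foldr_mult)
  then obtain B where B: "\<forall>x\<in>ball 0 1. norm (f (foldr_mult (\<lambda>(x, y). x \<otimes>\<^bsub>G\<^esub> y) us x)) \<le> B"
    by blast
  have "norm (f x) \<le> B" if "norm x < \<epsilon>" for x
  proof -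
    have "x \<in> foldr_mult (\<lambda>(x, y). x \<otimes>\<^bsub>G\<^esub> y) us ` ball 0 1" using \<epsilon>(2) that by auto
    then show ?thesis using B by auto
  qed
  then show ?thesis using \<epsilon>(1) by blast
qed

lemma isCont_zero: "isCont f 0"
proof -
  obtain \<epsilon> K where \<epsilon>: "\<epsilon> > 0" and K: "\<And>x. norm x < \<epsilon> \<Longrightarrow> norm (f x) \<le> K"
    using locally_bounded by blast
  have K0: "K \<ge> 0" using K[of 0] \<epsilon> f_zero by simp
  obtain CM where CM: "CM \<ge> 0"
    "\<And>r z. 0 < r \<Longrightarrow> r \<le> 1 \<Longrightarrow> norm (dil M r z) \<le> r * CM * norm z"
    using M.norm_dil_le by blast
  obtain CG where CG: "CG \<ge> 0"
    "\<And>r z. 0 < r \<Longrightarrow> r \<le> 1 \<Longrightarrow> norm (dil G (1/r) z) \<le> CG / r ^ \<iota>G * norm z"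
    using G.norm_dil_inverse_le by blast
  have "\<exists>\<delta>>0. \<forall>x. norm x < \<delta> \<longrightarrow> norm (f x) < \<eta>" if \<eta>: "\<eta> > 0" for \<eta>
  proof -
    define r where "r = min 1 (\<eta> / (CM * K + 1))"
    have CMK: "CM * K \<ge> 0" using CM(1) K0 by simp
    have r: "0 < r" "r \<le> 1" "r \<le> \<eta> / (CM * K + 1)" unfolding r_def using \<eta> CMK by auto
    define \<delta> where "\<delta> = \<epsilon> * r ^ \<iota>G / (CG + 1)"
    have "norm (f x) < \<eta>" if x: "norm x < \<delta>" for x
    proof -
      define y where "y = dil G (1/r) x"
      have rp: "r ^ \<iota>G > 0" using r by simp
      have "norm y \<le> CG / r ^ \<iota>G * norm x" unfolding y_def using CG(2) r by blast
      also have "\<dots> \<le> CG / r ^ \<iota>G * \<delta>" using x CG(1) rp by (intro mult_left_mono) auto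
      also have "\<dots> = CG / (CG + 1) * \<epsilon>" unfolding \<delta>_def using rp CG(1) r(1) by (simp add: field_simps)
      also have "\<dots> < \<epsilon>" using CG(1) \<epsilon> by (simp add: field_simps)
      finally have "norm y < \<epsilon>" .
      have "f x = dil M r (f y)" unfolding y_def using G.dil_dil_inverse f_dil r by metis
      then have "norm (f x) \<le> r * CM * norm (f y)" using CM(2) r by simp
      also have "\<dots> \<le> r * (CM * K)"
        using K[OF \<open>norm y < \<epsilon>\<close>] r CM(1) by (simp add: mult_left_mono mult.assoc)
      also have "\<dots> \<le> \<eta> / (CM * K + 1) * (CM * K)" using r CMK by (intro mult_right_mono) auto
      also have "\<dots> < \<eta>" using \<eta> CMK by (simp add: field_simps)
      finally show ?thesis .
    qed
    moreover have "\<delta> > 0" unfolding \<delta>_def using \<epsilon> r CG by simp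
    ultimately show ?thesis by blast
  qed
  then show ?thesis unfolding isCont_def LIM_eq using f_zero by (simp, blast)
qed

lemma continuous_on_f: "continuous_on UNIV f"
proof -
  have "isCont f x" for x
  proof -
    define x' where "x' = inv\<^bsub>G\<^esub> x"
    have "x \<otimes>\<^bsub>G\<^esub> (x' \<otimes>\<^bsub>G\<^esub> y) = y" for y
      unfolding x'_def using G.is_group G.carrier_eq_UNIV by (metis UNIV_I group.inv_solve_left)
    then have translate: "f = (\<lambda>y. f x \<otimes>\<^bsub>M\<^esub> f (x' \<otimes>\<^bsub>G\<^esub> y))" using f_mult by metis
    have "x' \<otimes>\<^bsub>G\<^esub> x = 0"
      unfolding x'_def using group.l_inv[OF G.is_group] G.carrier_eq_UNIV G.one_eq_zero by simp
    then have "isCont (\<lambda>y. f (x' \<otimes>\<^bsub>G\<^esub> y)) x"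
      using isCont_o2[OF G.continuous_left_translation] isCont_zero by metis
    then have "isCont (\<lambda>y. f x \<otimes>\<^bsub>M\<^esub> f (x' \<otimes>\<^bsub>G\<^esub> y)) x"
      using isCont_o2 M.continuous_left_translation by blast
    then show ?thesis using translate by metis
  qed
  then show ?thesis by (simp add: continuous_at_imp_continuous_on)
qed

end

lemma h_hom_continuous:
  fixes G :: "('a::euclidean_space) dil_group" and M :: "('b::euclidean_space) dil_group"
  assumes "graded_group G" "graded_group M" "h_hom G M f"
  shows "continuous_on UNIV f"
proof -
  obtain \<iota>G VG \<iota>M VM where "graded_coordinates G \<iota>G VG" "graded_coordinates M \<iota>M VM"
    using graded_group_imp_graded_coordinates[OF assms(1)]
      graded_group_imp_graded_coordinates[OF assms(2)] by blast
  then interpret graded_h_hom G \<iota>G VG M \<iota>M VM f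
    by (intro graded_h_hom.intro graded_h_hom_axioms.intro assms(3))
  show ?thesis by (rule continuous_on_f)
qed

section \<open>Complements of the kernel and sections\<close>

lemma (in group_hom) iso_restriction_to_complement:
  assumes "h ` carrier G = carrier H" and "subgroup K G"
    and "kernel G H h <#> K = carrier G" and "kernel G H h \<inter> K = {\<one>}"
  shows "h \<in> iso (G\<lparr>carrier := K\<rparr>) H"
proof -
  interpret K: group_hom "G\<lparr>carrier := K\<rparr>" H h
    by (rule induced_group_hom'[OF assms(2)])
  have "y \<in> h ` K" if "y \<in> carrier H" for y
  proof -
    obtain x where x: "x \<in> carrier G" "y = h x" using assms(1) \<open>y \<in> carrier H\<close> by blast
    then have "x \<in> kernel G H h <#> K" using assms(3) by simp
    then obtain n k where "n \<in> kernel G H h" "k \<in> K" "x = n \<otimes> k"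
      unfolding set_mult_def by blast
    then have "y = h k" using x subgroup.subset[OF assms(2)] by (auto simp: kernel_def)
    then show ?thesis using \<open>k \<in> K\<close> by blast
  qed
  moreover have "x = \<one>" if "x \<in> K" "h x = \<one>\<^bsub>H\<^esub>" for x
    using that assms(4) subgroup.subset[OF assms(2)] unfolding kernel_def by blast
  ultimately show ?thesis unfolding K.iso_iff by auto
qed

lemma (in group_hom) complementary_kernel_image_section:
  assumes "g \<in> hom H G" and "\<And>y. y \<in> carrier H \<Longrightarrow> h (g y) = y"
  shows "kernel G H h <#> g ` carrier H = carrier G" and "kernel G H h \<inter> g ` carrier H = {\<one>}"
proof -
  interpret g: group_hom H G g by unfold_locales (rule assms(1))
  show "kernel G H h <#> g ` carrier H = carrier G"
  proof
    show "kernel G H h <#> g ` carrier H \<subseteq> carrier G"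
      unfolding set_mult_def kernel_def by auto
    show "carrier G \<subseteq> kernel G H h <#> g ` carrier H"
    proof
      fix x assume x: "x \<in> carrier G"
      define n where "n = x \<otimes> inv (g (h x))"
      have n: "n \<in> kernel G H h" using x assms(2) unfolding n_def kernel_def by simp
      have "n \<otimes> g (h x) = x"
      proof -
        have gx: "g (h x) \<in> carrier G" using x by simp
        have "n \<otimes> g (h x) = x \<otimes> (inv (g (h x)) \<otimes> g (h x))"
          unfolding n_def using x gx by (intro G.m_assoc) auto
        then show ?thesis using x gx by simp
      qed
      moreover have "g (h x) \<in> g ` carrier H" using x by simp
      ultimately show "x \<in> kernel G H h <#> g ` carrier H"
        unfolding set_mult_def using n by (intro UN_I) auto
    qed
  qed
  show "kernel G H h \<inter> g ` carrier H = {\<one>}"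
  proof
    show "kernel G H h \<inter> g ` carrier H \<subseteq> {\<one>}"
    proof
      fix x assume "x \<in> kernel G H h \<inter> g ` carrier H"
      then obtain y where y: "y \<in> carrier H" "x = g y" "h x = \<one>\<^bsub>H\<^esub>"
        unfolding kernel_def by auto
      then show "x \<in> {\<one>}" using assms(2)[OF y(1)] by simp
    qed
    have "\<one> \<in> g ` carrier H" using g.hom_one H.one_closed by (metis imageI)
    then show "{\<one>} \<subseteq> kernel G H h \<inter> g ` carrier H" unfolding kernel_def by simp
  qed
qed

lemma h_iso_restriction_to_complement:
  assumes "group G" "group M" "h_hom G M L" "L ` carrier G = carrier M"
    and "subgroup H G" "\<And>r. r > 0 \<Longrightarrow> dil G r ` H \<subseteq> H"
    and "complementary G (kernel G M L) H"
  shows "h_iso (G\<lparr>carrier := H\<rparr>) M L"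
proof -
  interpret group_hom G M L
    using assms(1-3) unfolding h_hom_def by (simp add: group_hom_def group_hom_axioms_def)
  have L_iso: "L \<in> iso (G\<lparr>carrier := H\<rparr>) M"
    using assms(4,5,7) unfolding complementary_def by (intro iso_restriction_to_complement) auto
  define g where "g = inv_into H L"
  have g_iso: "g \<in> iso M (G\<lparr>carrier := H\<rparr>)"
    using group.iso_set_sym[OF subgroup.subgroup_is_group[OF assms(5,1)] L_iso]
    unfolding g_def by simp
  have bij: "bij_betw L H (carrier M)" using L_iso unfolding iso_def by simp
  have gL: "g (L x) = x" if "x \<in> H" for x
    using bij that unfolding g_def by (simp add: bij_betw_inv_into_left)
  have Lg: "g y \<in> H" "L (g y) = y" if "y \<in> carrier M" for y
    using bij that unfolding g_def by (auto simp: bij_betw_inv_into_right inv_into_into bij_betw_def)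
  have L_dil: "L (dil G r x) = dil M r (L x)" if "r > 0" "x \<in> H" for r x
    using assms(3) subgroup.subset[OF assms(5)] that unfolding h_hom_def by blast
  have g_dil: "g (dil M r y) = dil G r (g y)" if "r > 0" "y \<in> carrier M" for r y
  proof -
    have "dil G r (g y) \<in> H" using assms(6)[OF \<open>r > 0\<close>] Lg(1)[OF \<open>y \<in> carrier M\<close>] by blast
    then show ?thesis using gL L_dil[OF \<open>r > 0\<close>] Lg[OF \<open>y \<in> carrier M\<close>] by metis
  qed
  show ?thesis
    unfolding h_iso_def h_hom_def
  proof (intro conjI exI[of _ g])
    show "L \<in> hom (G\<lparr>carrier := H\<rparr>) M" "g \<in> hom M (G\<lparr>carrier := H\<rparr>)"
      using L_iso g_iso unfolding iso_def by auto
  qed (simp_all add: L_dil g_dil gL Lg)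
qed

lemma h_epi_if_h_iso_restriction:
  assumes "h_hom G M L" "subgroup H G" "h_iso (G\<lparr>carrier := H\<rparr>) M L"
  shows "h_epi G M L"
proof -
  obtain g where "h_hom M (G\<lparr>carrier := H\<rparr>) g" "\<forall>y\<in>carrier M. L (g y) = y"
    using assms(3) unfolding h_iso_def by blast
  then have "h_hom M G g" "\<forall>y\<in>carrier M. L (g y) = y"
    using subgroup.subset[OF assms(2)] unfolding h_hom_def hom_def by auto
  then show ?thesis using assms(1) unfolding h_epi_def by blast
qed

lemma range_section_homeomorphic:
  fixes g :: "'b::topological_space \<Rightarrow> 'a::topological_space"
  assumes "continuous_on UNIV L" "continuous_on UNIV g" "\<And>y. L (g y) = y"
  shows "range g homeomorphic (UNIV :: 'b set)"
  unfolding homeomorphic_def homeomorphism_def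
proof (rule exI[of _ L], rule exI[of _ g], intro conjI)
  show "L ` range g = UNIV" by (simp add: image_image assms(3))
  show "continuous_on (range g) L" using continuous_on_subset[OF assms(1)] by blast
qed (auto simp: assms)

lemma closed_range_section:
  fixes g :: "'b::topological_space \<Rightarrow> 'a::t2_space"
  assumes "continuous_on UNIV L" "continuous_on UNIV g" "\<And>y. L (g y) = y"
  shows "closed (range g)"
proof -
  have "range g = {x. g (L x) = x}" using assms(3) by auto (metis rangeI)
  moreover have "continuous_on UNIV (g \<circ> L)"
    using continuous_on_compose[OF assms(1) continuous_on_subset[OF assms(2)]] by simp
  ultimately show ?thesis using closed_Collect_eq[OF _ continuous_on_id] by (simp add: comp_def)
qed

lemma homogeneous_subgroup_range_h_section:
  fixes G :: "('a::euclidean_space) dil_group" and M :: "('b::euclidean_space) dil_group"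
  assumes "graded_group G" "graded_group M" "h_hom G M L" "h_hom M G g" "\<And>y. L (g y) = y"
  shows "homogeneous_subgroup G (range g)"
proof -
  have "group G" "group M" and carrier_M: "carrier M = UNIV"
    using assms(1,2) unfolding graded_group_def by auto
  then have "subgroup (range g) G"
    using group_hom.img_is_subgroup[of M G g] assms(4)
    unfolding h_hom_def group_hom_def group_hom_axioms_def by simp
  moreover have cont: "continuous_on UNIV L" "continuous_on UNIV g"
    using h_hom_continuous assms(1-4) by blast+
  then have "range g homeomorphic (UNIV :: 'b set)"
    using range_section_homeomorphic assms(5) by blast
  then have "connected (range g)" "simply_connected (range g)"
    using homeomorphic_connectedness homeomorphic_simply_connected_eq connected_UNIV
      convex_imp_simply_connected[OF convex_UNIV] by auto
  moreover have "closed (range g)" using closed_range_section cont assms(5) by blast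
  moreover have "dil G r ` range g \<subseteq> range g" if "r > 0" for r
  proof -
    have "dil G r (g y) = g (dil M r y)" for y
      using assms(4) that carrier_M unfolding h_hom_def by simp
    then show ?thesis by (auto simp del: range_composition)
  qed
  ultimately show ?thesis unfolding homogeneous_subgroup_def by blast
qed

theorem proposition7p17:
  fixes G :: "('a::euclidean_space) dil_group" and M :: "('b::euclidean_space) dil_group"
    and L :: "'a \<Rightarrow> 'b"
  assumes "graded_group G" and "graded_group M"
    and "h_hom G M L" and "L ` carrier G = carrier M"
  shows "((\<exists>H. homogeneous_subgroup G H \<and> complementary G (kernel G M L) H)
            \<longleftrightarrow> h_epi G M L) \<and>
         (\<forall>H. homogeneous_subgroup G H \<and> complementary G (kernel G M L) H
              \<longrightarrow> h_iso (G\<lparr>carrier := H\<rparr>) M L)"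
proof -
  have groups: "group G" "group M" and "carrier M = UNIV"
    using assms(1,2) unfolding graded_group_def by auto
  have iso: "h_iso (G\<lparr>carrier := H\<rparr>) M L"
    if "homogeneous_subgroup G H" "complementary G (kernel G M L) H" for H
    using h_iso_restriction_to_complement[OF groups assms(3,4)] that
    unfolding homogeneous_subgroup_def by blast
  moreover have "h_epi G M L"
    if "homogeneous_subgroup G H" "complementary G (kernel G M L) H" for H
    using h_epi_if_h_iso_restriction[OF assms(3) _ iso[OF that]] that(1)
    unfolding homogeneous_subgroup_def by blast
  moreover have "\<exists>H. homogeneous_subgroup G H \<and> complementary G (kernel G M L) H"
    if epi: "h_epi G M L"
  proof -
    obtain g where g: "h_hom M G g" "\<And>y. L (g y) = y"
      using epi \<open>carrier M = UNIV\<close> unfolding h_epi_def by auto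
    have "complementary G (kernel G M L) (g ` carrier M)"
      using group_hom.complementary_kernel_image_section[of G M L g] groups assms(3) g
      unfolding complementary_def h_hom_def group_hom_def group_hom_axioms_def by blast
    then show ?thesis
      using homogeneous_subgroup_range_h_section[OF assms(1-3) g] \<open>carrier M = UNIV\<close> by auto
  qed
  ultimately show ?thesis by blast
qed

end
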